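(* Let $\mathcal{S}=\{s_1,\dots,s_N\}$ be a finite state space, $\mathcal{A}$ a finite action space, $\gamma\in(0,1)$, and consider the real MDP $\langle\mathcal{S},\mathcal{A},\mathbb{P},R,\gamma\rangle$ and the DT MDP $\langle\mathcal{S},\mathcal{A},\mathbb{P}',R',\gamma\rangle$. Then $$\max_i\bar d(s_i,s_i)\le\frac{1}{1-\gamma}\max_i d_{\mathrm{TV}}(s_i,s_i).$$
   Context: $\mathbb{P}(\cdot|s,a),\mathbb{P}'(\cdot|s,a)$ are probability distributions on $\mathcal{S}$; $R,R':\mathcal{S}\times\mathcal{A}\to\mathbb{R}$; $R_{\max}=\max_{i,j,a}|R(s_i,a)-R'(s_j,a)|$. For distributions $P,Q$ on $\mathcal{S}$ and a cost $d:\mathcal{S}\times\mathcal{S}\to[0,\infty)$ (not required to vanish on the diagonal; first argument a real-MDP state, second a DT-MDP state), $W_1(P,Q;d)=\min_\Lambda\sum_{i,j}\lambda_{i,j}d(s_i,s_j)$ over nonnegative $N\times N$ matrices with row sums $P(s_i)$ and column sums $Q(s_j)$. Define $d_0\equiv0$, $d_n(s_i,s_j)=\max_a\{|R(s_i,a)-R'(s_j,a)|+\gamma W_1(\mathbb{P}(\cdot|s_i,a),\mathbb{P}'(\cdot|s_j,a);d_{n-1})\}$; the DT bisimulation metric $\bar d$ is the pointwise limit of the nondecreasing sequence $(d_n)$; it takes values in $[0,\frac{R_{\max}}{1-\gamma}]$ and satisfies $\bar d(s_i,s_j)=\max_a\{|R(s_i,a)-R'(s_j,a)|+\gamma W_1(\mathbb{P}(\cdot|s_i,a),\mathbb{P}'(\cdot|s_j,a);\bar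 d)\}$. With $\mathrm{TV}(P,Q)=\frac12\sum_i|P(s_i)-Q(s_i)|$, define $d_{\mathrm{TV}}(s_i,s_i)=\max_a\{|R(s_i,a)-R'(s_i,a)|+\frac{\gamma R_{\max}}{1-\gamma}\mathrm{TV}(\mathbb{P}(\cdot|s_i,a),\mathbb{P}'(\cdot|s_i,a))\}$. *)

theory Defs
  imports "HOL-Analysis.Analysis"
begin

text \<open>States are a finite type 's (the state space S = {s_1,...,s_N}), actions a finite type 'a.
A transition kernel is P :: 's => 'a => 's => real, with P s a s' the probability of s' given (s,a).\<close>

definition stochastic :: "('s::finite \<Rightarrow> 'a \<Rightarrow> 's \<Rightarrow> real) \<Rightarrow> bool" where
  "stochastic P \<longleftrightarrow> (\<forall>s a s'. 0 \<le> P s a s') \<and> (\<forall>s a. (\<Sum>s'\<in>UNIV. P s a s') = 1)"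

definition couplings :: "('s::finite \<Rightarrow> real) \<Rightarrow> ('s \<Rightarrow> real) \<Rightarrow> ('s \<Rightarrow> 's \<Rightarrow> real) set" where
  "couplings p q = {L. (\<forall>i j. 0 \<le> L i j) \<and> (\<forall>i. (\<Sum>j\<in>UNIV. L i j) = p i)
                       \<and> (\<forall>j. (\<Sum>i\<in>UNIV. L i j) = q j)}"

text \<open>Wasserstein-1 distance with (not necessarily diagonal-vanishing) cost d: minimum over couplings
(the minimum is attained; we write it as the infimum).\<close>
definition W1 :: "('s::finite \<Rightarrow> real) \<Rightarrow> ('s \<Rightarrow> real) \<Rightarrow> ('s \<Rightarrow> 's \<Rightarrow> real) \<Rightarrow> real" where
  "W1 p q d = Inf ((\<lambda>L. \<Sum>i\<in>UNIV. \<Sum>j\<in>UNIV. L i j * d i j) ` couplings p q)"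

definition Rmax :: "('s::finite \<Rightarrow> 'a::finite \<Rightarrow> real) \<Rightarrow> ('s \<Rightarrow> 'a \<Rightarrow> real) \<Rightarrow> real" where
  "Rmax R R' = Max {\<bar>R si a - R' sj a\<bar> | si sj a. True}"

fun dseq :: "real \<Rightarrow> ('s::finite \<Rightarrow> 'a::finite \<Rightarrow> 's \<Rightarrow> real) \<Rightarrow> ('s \<Rightarrow> 'a \<Rightarrow> 's \<Rightarrow> real)
    \<Rightarrow> ('s \<Rightarrow> 'a \<Rightarrow> real) \<Rightarrow> ('s \<Rightarrow> 'a \<Rightarrow> real) \<Rightarrow> nat \<Rightarrow> 's \<Rightarrow> 's \<Rightarrow> real" where
  "dseq \<gamma> P P' R R' 0 = (\<lambda>si sj. 0)"
| "dseq \<gamma> P P' R R' (Suc n) = (\<lambda>si sj. Max (range (\<lambda>a.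
      \<bar>R si a - R' sj a\<bar> + \<gamma> * W1 (P si a) (P' sj a) (dseq \<gamma> P P' R R' n))))"

definition dbar :: "real \<Rightarrow> ('s::finite \<Rightarrow> 'a::finite \<Rightarrow> 's \<Rightarrow> real) \<Rightarrow> ('s \<Rightarrow> 'a \<Rightarrow> 's \<Rightarrow> real)
    \<Rightarrow> ('s \<Rightarrow> 'a \<Rightarrow> real) \<Rightarrow> ('s \<Rightarrow> 'a \<Rightarrow> real) \<Rightarrow> 's \<Rightarrow> 's \<Rightarrow> real" where
  "dbar \<gamma> P P' R R' si sj = lim (\<lambda>n. dseq \<gamma> P P' R R' n si sj)"

definition TV :: "('s::finite \<Rightarrow> real) \<Rightarrow> ('s \<Rightarrow> real) \<Rightarrow> real" where
  "TV p q = (1/2) * (\<Sum>s\<in>UNIV. \<bar>p s - q s\<bar>)"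

definition dTV :: "real \<Rightarrow> ('s::finite \<Rightarrow> 'a::finite \<Rightarrow> 's \<Rightarrow> real) \<Rightarrow> ('s \<Rightarrow> 'a \<Rightarrow> 's \<Rightarrow> real)
    \<Rightarrow> ('s \<Rightarrow> 'a \<Rightarrow> real) \<Rightarrow> ('s \<Rightarrow> 'a \<Rightarrow> real) \<Rightarrow> 's \<Rightarrow> real" where
  "dTV \<gamma> P P' R R' si = Max (range (\<lambda>a.
      \<bar>R si a - R' si a\<bar> + \<gamma> * Rmax R R' / (1 - \<gamma>) * TV (P si a) (P' si a)))"

end

theory Submission
  imports Defs
begin

text \<open>
The maximal coupling of two distributions puts the common mass min(p, q) on the diagonal and
spreads the remaining mass TV(p, q) independently. For a cost bounded by C everywhere and by M
on the diagonal it therefore costs at most M + C TV(p, q). By induction every d_n is bounded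
by R_max / (1 - \<gamma>), so on the diagonal
d_(n+1)(s, s) \<le> max_a (|R - R'| + \<gamma> R_max / (1 - \<gamma>) TV) + \<gamma> max_s d_n(s, s),
and with D = max_s d_TV(s, s) the bound d_n(s, s) \<le> D / (1 - \<gamma>) is inherited by d_(n+1),
hence by the limit of the nondecreasing bounded sequence (d_n(s, s)).
\<close>

definition prob_vec :: "('s::finite \<Rightarrow> real) \<Rightarrow> bool" where
  "prob_vec p \<longleftrightarrow> (\<forall>i. 0 \<le> p i) \<and> sum p UNIV = 1"

lemma stochastic_prob_vec:
  assumes "stochastic P"
  shows "prob_vec (P s a)"
  using assms unfolding stochastic_def prob_vec_def by blast

lemma product_coupling:
  assumes "prob_vec p" "prob_vec q"
  shows "(\<lambda>i j. p i * q j) \<in> couplings p q"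
  using assms unfolding couplings_def prob_vec_def
  by (simp add: sum_distrib_left[symmetric] sum_distrib_right[symmetric])

lemma W1_le_coupling_cost:
  assumes "L \<in> couplings p q" "\<And>i j. 0 \<le> d i j"
  shows "W1 p q d \<le> (\<Sum>i\<in>UNIV. \<Sum>j\<in>UNIV. L i j * d i j)"
  unfolding W1_def using assms
  by (intro cInf_lower bdd_belowI[of _ 0])
     (auto simp: couplings_def intro!: sum_nonneg mult_nonneg_nonneg)

lemma W1_nonneg:
  assumes "prob_vec p" "prob_vec q" "\<And>i j. 0 \<le> d i j"
  shows "0 \<le> W1 p q d"
proof -
  have "couplings p q \<noteq> {}"
    using product_coupling[OF assms(1,2)] by blast
  then show ?thesis
    unfolding W1_def using assms(3)
    by (intro cInf_greatest) (auto simp: couplings_def intro!: sum_nonneg mult_nonneg_nonneg)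
qed

lemma W1_mono:
  assumes "prob_vec p" "prob_vec q" "\<And>i j. 0 \<le> d i j" "\<And>i j. d i j \<le> d' i j"
  shows "W1 p q d \<le> W1 p q d'"
  unfolding W1_def
proof (rule cInf_mono)
  show "(\<lambda>L. \<Sum>i\<in>UNIV. \<Sum>j\<in>UNIV. L i j * d' i j) ` couplings p q \<noteq> {}"
    using product_coupling[OF assms(1,2)] by blast
  show "bdd_below ((\<lambda>L. \<Sum>i\<in>UNIV. \<Sum>j\<in>UNIV. L i j * d i j) ` couplings p q)"
    using assms(3) by (intro bdd_belowI[of _ 0])
       (auto simp: couplings_def intro!: sum_nonneg mult_nonneg_nonneg)
next
  fix c assume "c \<in> (\<lambda>L. \<Sum>i\<in>UNIV. \<Sum>j\<in>UNIV. L i j * d' i j) ` couplings p q"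
  then obtain L where "L \<in> couplings p q" and c: "c = (\<Sum>i\<in>UNIV. \<Sum>j\<in>UNIV. L i j * d' i j)"
    by blast
  then have "(\<Sum>i\<in>UNIV. \<Sum>j\<in>UNIV. L i j * d i j) \<le> c"
    using assms(4) by (auto simp: couplings_def intro!: sum_mono mult_left_mono)
  with \<open>L \<in> couplings p q\<close>
  show "\<exists>b\<in>(\<lambda>L. \<Sum>i\<in>UNIV. \<Sum>j\<in>UNIV. L i j * d i j) ` couplings p q. b \<le> c"
    by blast
qed

lemma W1_le_const:
  assumes "prob_vec p" "prob_vec q" "\<And>i j. 0 \<le> d i j" "\<And>i j. d i j \<le> C"
  shows "W1 p q d \<le> C"
proof -
  have "W1 p q d \<le> (\<Sum>i\<in>UNIV. \<Sum>j\<in>UNIV. p i * q j * d i j)"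
    using W1_le_coupling_cost[OF product_coupling[OF assms(1,2)]] assms(3) by blast
  also have "\<dots> \<le> (\<Sum>i\<in>UNIV. \<Sum>j\<in>UNIV. p i * q j * C)"
    using assms unfolding prob_vec_def by (intro sum_mono mult_left_mono) auto
  also have "\<dots> = C"
    using assms(1,2) unfolding prob_vec_def
    by (simp add: sum_distrib_left[symmetric] sum_distrib_right[symmetric])
  finally show ?thesis .
qed

lemma TV_nonneg: "0 \<le> TV p q"
  unfolding TV_def by (simp add: sum_nonneg)

lemma TV_commute: "TV p q = TV q p"
  unfolding TV_def by (simp add: abs_minus_commute)

lemma TV_eq_sum_excess:
  assumes "prob_vec p" "prob_vec q"
  shows "TV p q = (\<Sum>i\<in>UNIV. p i - min (p i) (q i))"
proof -
  have "(\<Sum>i\<in>UNIV. q i - min (p i) (q i)) = (\<Sum>i\<in>UNIV. p i - min (p i) (q i))"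
    using assms unfolding prob_vec_def by (simp add: sum_subtractf)
  moreover have "\<bar>p i - q i\<bar> = (p i - min (p i) (q i)) + (q i - min (p i) (q i))" for i
    by (simp add: min_def abs_if)
  then have "(\<Sum>i\<in>UNIV. \<bar>p i - q i\<bar>)
      = (\<Sum>i\<in>UNIV. p i - min (p i) (q i)) + (\<Sum>i\<in>UNIV. q i - min (p i) (q i))"
    by (simp only: sum.distrib)
  ultimately show ?thesis
    unfolding TV_def by simp
qed

definition maximal_coupling :: "('s::finite \<Rightarrow> real) \<Rightarrow> ('s \<Rightarrow> real) \<Rightarrow> 's \<Rightarrow> 's \<Rightarrow> real" where
  "maximal_coupling p q i j =
     (if i = j then min (p i) (q i) else 0)
     + (p i - min (p i) (q i)) * (q j - min (p j) (q j)) / TV p q"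

lemma maximal_coupling_in_couplings:
  assumes p: "prob_vec p" and q: "prob_vec q"
  shows "maximal_coupling p q \<in> couplings p q"
proof -
  let ?m = "\<lambda>i. min (p i) (q i)"
  have excess_p: "(\<Sum>i\<in>UNIV. p i - ?m i) = TV p q"
    using TV_eq_sum_excess[OF p q] by simp
  have excess_q: "(\<Sum>i\<in>UNIV. q i - ?m i) = TV p q"
    using TV_eq_sum_excess[OF q p] by (simp add: TV_commute min.commute)
  \<comment> \<open>if TV p q = 0 the excesses vanish, so dividing by it is harmless\<close>
  have excess_div: "x * TV p q / TV p q = x" if "x = p i - ?m i \<or> x = q i - ?m i" for x i
  proof (cases "TV p q = 0")
    case True
    have "\<forall>i\<in>UNIV. p i - ?m i = 0"
      using excess_p True by (intro sum_nonneg_eq_0_iff[THEN iffD1]) auto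
    moreover have "\<forall>i\<in>UNIV. q i - ?m i = 0"
      using excess_q True by (intro sum_nonneg_eq_0_iff[THEN iffD1]) auto
    ultimately show ?thesis
      using that by auto
  qed simp
  have "(\<Sum>j\<in>UNIV. maximal_coupling p q i j) = p i" for i
    using excess_div[of "p i - ?m i" i]
    by (simp add: maximal_coupling_def sum.distrib sum_divide_distrib[symmetric]
        sum_distrib_left[symmetric] excess_q)
  moreover have "(\<Sum>i\<in>UNIV. maximal_coupling p q i j) = q j" for j
    using excess_div[of "q j - ?m j" j]
    by (simp add: maximal_coupling_def sum.distrib sum_divide_distrib[symmetric]
        sum_distrib_right[symmetric] excess_p mult.commute)
  moreover have "0 \<le> maximal_coupling p q i j" for i j
    using p q unfolding maximal_coupling_def prob_vec_def TV_def
    by (auto intro!: add_nonneg_nonneg divide_nonneg_nonneg mult_nonneg_nonneg sum_nonneg)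
  ultimately show ?thesis
    unfolding couplings_def by blast
qed

lemma W1_le_diagonal_bound_plus_TV:
  assumes p: "prob_vec p" and q: "prob_vec q"
    and d_nonneg: "\<And>i j. 0 \<le> d i j" and d_le: "\<And>i j. d i j \<le> C"
    and d_diag: "\<And>i. d i i \<le> M" and "0 \<le> M"
  shows "W1 p q d \<le> M + C * TV p q"
proof -
  let ?m = "\<lambda>i. min (p i) (q i)"
  let ?excess = "\<lambda>i j. (p i - ?m i) * (q j - ?m j) / TV p q"
  have m_nonneg: "0 \<le> ?m i" for i
    using p q unfolding prob_vec_def by simp
  have excess_nonneg: "0 \<le> ?excess i j" for i j
    unfolding TV_def by (auto intro!: divide_nonneg_nonneg mult_nonneg_nonneg sum_nonneg)
  have "sum ?m UNIV \<le> sum p UNIV"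
    by (intro sum_mono) simp
  then have m_le_1: "sum ?m UNIV \<le> 1"
    using p unfolding prob_vec_def by simp
  have diagonal_part: "(\<Sum>i\<in>UNIV. \<Sum>j\<in>UNIV. (if i = j then ?m i else 0) * d i j) = (\<Sum>i\<in>UNIV. ?m i * d i i)"
    by (simp add: if_distrib[where f = "\<lambda>x. x * _"] sum.delta cong: if_cong)
  have "W1 p q d \<le> (\<Sum>i\<in>UNIV. \<Sum>j\<in>UNIV. maximal_coupling p q i j * d i j)"
    using W1_le_coupling_cost[OF maximal_coupling_in_couplings[OF p q]] d_nonneg by blast
  also have "\<dots> = (\<Sum>i\<in>UNIV. ?m i * d i i) + (\<Sum>i\<in>UNIV. \<Sum>j\<in>UNIV. ?excess i j * d i j)"
    by (simp add: maximal_coupling_def distrib_right sum.distrib diagonal_part)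
  also have "\<dots> \<le> (\<Sum>i\<in>UNIV. ?m i * M) + (\<Sum>i\<in>UNIV. \<Sum>j\<in>UNIV. ?excess i j * C)"
    using m_nonneg excess_nonneg d_diag d_le
    by (intro add_mono sum_mono mult_left_mono) auto
  also have "\<dots> = sum ?m UNIV * M
      + (\<Sum>i\<in>UNIV. p i - ?m i) * (\<Sum>j\<in>UNIV. q j - ?m j) / TV p q * C"
    unfolding sum_product by (simp add: sum_distrib_right sum_divide_distrib)
  also have "\<dots> = sum ?m UNIV * M + C * TV p q"
    using TV_eq_sum_excess[OF p q] TV_eq_sum_excess[OF q p] by (simp add: TV_commute min.commute)
  also have "\<dots> \<le> M + C * TV p q"
    using mult_right_mono[OF m_le_1 \<open>0 \<le> M\<close>] by simp
  finally show ?thesis .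
qed

lemma abs_reward_diff_le_Rmax: "\<bar>R si a - R' sj a\<bar> \<le> Rmax R R'"
proof -
  have "finite {\<bar>R si a - R' sj a\<bar> | si sj a. True}"
    by (rule finite_subset[of _ "(\<lambda>(si, sj, a). \<bar>R si a - R' sj a\<bar>) ` UNIV"])
       (auto intro!: image_eqI[where x = "(_, _, _)"])
  then show ?thesis
    unfolding Rmax_def by (rule Max_ge) blast
qed

lemma Rmax_nonneg: "0 \<le> Rmax R R'"
  using abs_reward_diff_le_Rmax[of R undefined undefined R' undefined] by linarith

lemma le_Max_dTV:
  "\<bar>R s a - R' s a\<bar> + \<gamma> * Rmax R R' / (1 - \<gamma>) * TV (P s a) (P' s a)
     \<le> Max (range (dTV \<gamma> P P' R R'))"
proof -
  have "\<bar>R s a - R' s a\<bar> + \<gamma> * Rmax R R' / (1 - \<gamma>) * TV (P s a) (P' s a) \<le> dTV \<gamma> P P' R R' s"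
    unfolding dTV_def by (simp add: Max_ge)
  also have "\<dots> \<le> Max (range (dTV \<gamma> P P' R R'))"
    by (simp add: Max_ge)
  finally show ?thesis .
qed

locale mdp_pair =
  fixes \<gamma> :: real
    and P P' :: "'s::finite \<Rightarrow> 'a::finite \<Rightarrow> 's \<Rightarrow> real"
    and R R' :: "'s \<Rightarrow> 'a \<Rightarrow> real"
  assumes discount_nonneg: "0 \<le> \<gamma>" and discount_less_1: "\<gamma> < 1"
    and stochastic_P: "stochastic P" and stochastic_P': "stochastic P'"
begin

abbreviation d :: "nat \<Rightarrow> 's \<Rightarrow> 's \<Rightarrow> real" where
  "d \<equiv> dseq \<gamma> P P' R R'"

lemma prob_vec_P: "prob_vec (P s a)" and prob_vec_P': "prob_vec (P' s a)"
  using stochastic_P stochastic_P' by (simp_all add: stochastic_prob_vec)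

lemma dseq_Suc_le:
  assumes "\<And>a. \<bar>R si a - R' sj a\<bar> + \<gamma> * W1 (P si a) (P' sj a) (d n) \<le> B"
  shows "d (Suc n) si sj \<le> B"
  using assms by (simp add: Max_le_iff)

lemma le_dseq_Suc: "\<bar>R si a - R' sj a\<bar> + \<gamma> * W1 (P si a) (P' sj a) (d n) \<le> d (Suc n) si sj"
  by (simp add: Max_ge)

lemma dseq_bounds: "0 \<le> d n si sj \<and> d n si sj \<le> Rmax R R' / (1 - \<gamma>)"
proof (induction n arbitrary: si sj)
  case 0
  show ?case
    using Rmax_nonneg[of R R'] discount_less_1 by simp
next
  case (Suc n)
  let ?C = "Rmax R R' / (1 - \<gamma>)"
  have W1_bounds: "0 \<le> W1 (P si a) (P' sj a) (d n) \<and> W1 (P si a) (P' sj a) (d n) \<le> ?C" for a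
    using Suc.IH by (simp add: W1_nonneg W1_le_const prob_vec_P prob_vec_P')
  have "0 \<le> \<bar>R si a - R' sj a\<bar> + \<gamma> * W1 (P si a) (P' sj a) (d n)" for a
    using W1_bounds discount_nonneg by simp
  then have "0 \<le> d (Suc n) si sj"
    using le_dseq_Suc order_trans by blast
  moreover have "d (Suc n) si sj \<le> ?C"
  proof (rule dseq_Suc_le)
    fix a
    have "\<bar>R si a - R' sj a\<bar> + \<gamma> * W1 (P si a) (P' sj a) (d n) \<le> Rmax R R' + \<gamma> * ?C"
      using abs_reward_diff_le_Rmax W1_bounds discount_nonneg by (intro add_mono mult_left_mono) auto
    also have "\<dots> = ?C"
      using discount_less_1 by (simp add: field_simps)
    finally show "\<bar>R si a - R' sj a\<bar> + \<gamma> * W1 (P si a) (P' sj a) (d n) \<le> ?C" .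
  qed
  ultimately show ?case ..
qed

lemma dseq_le_Suc: "d n si sj \<le> d (Suc n) si sj"
proof (induction n arbitrary: si sj)
  case 0
  show ?case
    using dseq_bounds[of "Suc 0"] by simp
next
  case (Suc n)
  show ?case
  proof (rule dseq_Suc_le)
    fix a
    have "W1 (P si a) (P' sj a) (d n) \<le> W1 (P si a) (P' sj a) (d (Suc n))"
      using Suc.IH dseq_bounds by (simp add: W1_mono prob_vec_P prob_vec_P')
    then have "\<bar>R si a - R' sj a\<bar> + \<gamma> * W1 (P si a) (P' sj a) (d n)
        \<le> \<bar>R si a - R' sj a\<bar> + \<gamma> * W1 (P si a) (P' sj a) (d (Suc n))"
      using discount_nonneg by (simp add: mult_left_mono)
    also have "\<dots> \<le> d (Suc (Suc n)) si sj"
      by (rule le_dseq_Suc)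
    finally show "\<bar>R si a - R' sj a\<bar> + \<gamma> * W1 (P si a) (P' sj a) (d n) \<le> d (Suc (Suc n)) si sj" .
  qed
qed

lemma Max_dTV_nonneg: "0 \<le> Max (range (dTV \<gamma> P P' R R'))"
proof -
  have "0 \<le> \<gamma> * Rmax R R' / (1 - \<gamma>) * TV (P s a) (P' s a)" for s a
    using discount_nonneg discount_less_1 Rmax_nonneg[of R R'] TV_nonneg
    by (intro mult_nonneg_nonneg divide_nonneg_pos) auto
  then have "0 \<le> \<bar>R s a - R' s a\<bar> + \<gamma> * Rmax R R' / (1 - \<gamma>) * TV (P s a) (P' s a)" for s a
    by (simp add: add_nonneg_nonneg)
  then show ?thesis
    by (meson le_Max_dTV order_trans)
qed

lemma dseq_diagonal_le: "d n s s \<le> Max (range (dTV \<gamma> P P' R R')) / (1 - \<gamma>)"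
proof (induction n arbitrary: s)
  case 0
  show ?case
    using Max_dTV_nonneg discount_less_1 by simp
next
  case (Suc n)
  let ?D = "Max (range (dTV \<gamma> P P' R R'))"
  let ?C = "Rmax R R' / (1 - \<gamma>)"
  show ?case
  proof (rule dseq_Suc_le)
    fix a
    have "W1 (P s a) (P' s a) (d n) \<le> ?D / (1 - \<gamma>) + ?C * TV (P s a) (P' s a)"
      using dseq_bounds Suc.IH Max_dTV_nonneg discount_less_1
      by (intro W1_le_diagonal_bound_plus_TV prob_vec_P prob_vec_P') auto
    then have "\<bar>R s a - R' s a\<bar> + \<gamma> * W1 (P s a) (P' s a) (d n)
        \<le> \<bar>R s a - R' s a\<bar> + \<gamma> * (?D / (1 - \<gamma>) + ?C * TV (P s a) (P' s a))"
      using discount_nonneg by (intro add_left_mono mult_left_mono)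
    also have "\<dots> = (\<bar>R s a - R' s a\<bar> + \<gamma> * ?C * TV (P s a) (P' s a)) + \<gamma> * (?D / (1 - \<gamma>))"
      by (simp add: algebra_simps)
    also have "\<dots> \<le> ?D + \<gamma> * (?D / (1 - \<gamma>))"
      using le_Max_dTV by simp
    also have "\<dots> = ?D / (1 - \<gamma>)"
      using discount_less_1 by (simp add: field_simps)
    finally show "\<bar>R s a - R' s a\<bar> + \<gamma> * W1 (P s a) (P' s a) (d n) \<le> ?D / (1 - \<gamma>)" .
  qed
qed

lemma dseq_tendsto_dbar: "(\<lambda>n. d n si sj) \<longlonglongrightarrow> dbar \<gamma> P P' R R' si sj"
proof -
  have "incseq (\<lambda>n. d n si sj)"
    by (intro incseq_SucI dseq_le_Suc)
  moreover have "bdd_above (range (\<lambda>n. d n si sj))"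
    using dseq_bounds by (intro bdd_aboveI[of _ "Rmax R R' / (1 - \<gamma>)"]) auto
  ultimately have "convergent (\<lambda>n. d n si sj)"
    using LIMSEQ_incseq_SUP convergentI by blast
  then show ?thesis
    unfolding dbar_def by (simp add: convergent_LIMSEQ_iff)
qed

lemma dbar_diagonal_le: "dbar \<gamma> P P' R R' s s \<le> 1 / (1 - \<gamma>) * Max (range (dTV \<gamma> P P' R R'))"
  using LIMSEQ_le_const2[OF dseq_tendsto_dbar] dseq_diagonal_le by simp

end

theorem lemma5:
  fixes \<gamma> :: real
    and P P' :: "'s::finite \<Rightarrow> 'a::finite \<Rightarrow> 's \<Rightarrow> real"
    and R R' :: "'s \<Rightarrow> 'a \<Rightarrow> real"
  assumes "0 < \<gamma>" and "\<gamma> < 1"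
    and "stochastic P" and "stochastic P'"
  shows "Max (range (\<lambda>s. dbar \<gamma> P P' R R' s s))
           \<le> 1 / (1 - \<gamma>) * Max (range (\<lambda>s. dTV \<gamma> P P' R R' s))"
proof -
  interpret mdp_pair \<gamma> P P' R R'
    using assms by unfold_locales auto
  show ?thesis
    using dbar_diagonal_le by (simp add: Max_le_iff)
qed

end
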